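(* Let $\sigma:\mathbb{R}\to\mathbb{R}$ be Lipschitz continuous with exactly $n$ zeros $x_1<\cdots<x_n$, and set $x_0=-\infty$, $x_{n+1}=+\infty$. For $i=0,1,\dots,n$ let $H_i(x)=\int_{a_i}^x\frac{\mathrm{d}y}{\sigma(y)}$ for $x\in(x_i,x_{i+1})$, where $a_i\in(x_i,x_{i+1})$ is a constant. Then for each $i=0,1,\dots,n$: (i) $H_i$ is well defined and monotone on $(x_i,x_{i+1})$; (ii) $H_i$ is a bijection from $(x_i,x_{i+1})$ onto $(-\infty,\infty)$; (iii) $H_i$ has an inverse $H_i^{-1}$, which is a bijection from $(-\infty,\infty)$ onto $(x_i,x_{i+1})$; (iv) for every $y\in\mathbb{R}$, the map $x\mapsto H_i^{-1}(H_i(x)+y)$ is a bijection from $(x_i,x_{i+1})$ onto $(x_i,x_{i+1})$, and $$\lim_{x\to x_i^+}H_i^{-1}(H_i(x)+y)=x_i,\qquad \lim_{x\to x_{i+1}^-}H_i^{-1}(H_i(x)+y)=x_{i+1}.$$ *)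

theory Defs
  imports "HOL-Analysis.Analysis"
begin

text \<open>The open interval (x_i, x_(i+1)) between consecutive zeros, with the
conventions x_0 = -infinity and x_(n+1) = +infinity.\<close>
definition zero_gap :: "(nat \<Rightarrow> real) \<Rightarrow> nat \<Rightarrow> nat \<Rightarrow> real set" where
  "zero_gap xs n i = {t. (i = 0 \<or> xs i < t) \<and> (i = n \<or> t < xs (Suc i))}"

definition oriented_integral :: "real \<Rightarrow> real \<Rightarrow> (real \<Rightarrow> real) \<Rightarrow> real" where
  "oriented_integral a x f = (if a \<le> x then integral {a..x} f else - integral {x..a} f)"

definition H_fun :: "(real \<Rightarrow> real) \<Rightarrow> real \<Rightarrow> real \<Rightarrow> real" where
  "H_fun \<sigma> a x = oriented_integral a x (\<lambda>y. 1 / \<sigma> y)"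

end

theory Submission
  imports Defs "HOL-Real_Asymp.Real_Asymp"
begin

text \<open>On a gap between consecutive zeros \<sigma> has constant sign, so H is a strictly monotone
antiderivative of 1/\<sigma>. The Lipschitz bound |\<sigma>(z)| \<le> L |z - x_j| near a zero x_j, and the
linear growth of \<sigma> at infinity, make |1/\<sigma>| dominate the derivative of a logarithm, so H
diverges at both ends of the gap and maps it onto \<real>. Then x \<mapsto> H\<inverse>(H(x) + y) is a strictly
increasing bijection of the gap onto itself, and such a map necessarily tends to the endpoints.\<close>

lemma is_interval_zero_gap: "is_interval (zero_gap xs n i)"
  unfolding is_interval_1 by (auto simp: zero_gap_def)

lemma open_zero_gap: "open (zero_gap xs n i)"
proof -
  have "zero_gap xs n i =
      (if i = 0 then UNIV else {xs i<..}) \<inter> (if i = n then UNIV else {..<xs (Suc i)})"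
    by (auto simp: zero_gap_def)
  then show ?thesis by (auto intro!: open_Int)
qed

lemma xs_notin_zero_gap:
  assumes ord: "strict_mono_on {1..n} xs" and "i \<le> n" and k: "k \<in> {1..n}"
  shows "xs k \<notin> zero_gap xs n i"
proof
  assume x: "xs k \<in> zero_gap xs n i"
  show False
  proof (cases "k \<le> i")
    case True
    then have "i \<noteq> 0" "i \<in> {1..n}" using k \<open>i \<le> n\<close> by auto
    then have "xs k \<le> xs i" using strict_mono_on_leD[OF ord k _ True] by auto
    moreover have "xs i < xs k" using x \<open>i \<noteq> 0\<close> by (simp add: zero_gap_def)
    ultimately show False by simp
  next
    case False
    then have "i \<noteq> n" "Suc i \<in> {1..n}" "Suc i \<le> k" using k \<open>i \<le> n\<close> by auto
    then have "xs (Suc i) \<le> xs k" using strict_mono_on_leD[OF ord _ k] by auto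
    moreover have "xs k < xs (Suc i)" using x \<open>i \<noteq> n\<close> by (simp add: zero_gap_def)
    ultimately show False by simp
  qed
qed

lemma continuous_on_sign_cases:
  fixes f :: "real \<Rightarrow> real"
  assumes "is_interval S" "continuous_on S f" "\<And>x. x \<in> S \<Longrightarrow> f x \<noteq> 0"
  shows "(\<forall>x\<in>S. 0 < f x) \<or> (\<forall>x\<in>S. f x < 0)"
proof (rule ccontr)
  assume "\<not> ?thesis"
  then obtain u v where "u \<in> S" "v \<in> S" "f v \<le> 0" "0 \<le> f u" by force
  moreover have "is_interval (f ` S)"
    using assms(1,2) by (simp add: is_interval_connected_1 connected_continuous_image)
  ultimately have "0 \<in> f ` S" unfolding is_interval_1 by blast
  then show False using assms(3) by auto
qed

lemma strict_mono_on_if_deriv_pos: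
  fixes f :: "real \<Rightarrow> real"
  assumes S: "is_interval S"
    and f': "\<And>x. x \<in> S \<Longrightarrow> (f has_real_derivative f' x) (at x)" "\<And>x. x \<in> S \<Longrightarrow> 0 < f' x"
  shows "strict_mono_on S f"
proof (rule strict_mono_onI)
  fix r s assume "r \<in> S" "s \<in> S" "r < s"
  show "f r < f s"
  proof (rule DERIV_pos_imp_increasing[OF \<open>r < s\<close>])
    fix x assume "r \<le> x" "x \<le> s"
    then have "x \<in> S" using S \<open>r \<in> S\<close> \<open>s \<in> S\<close> by (meson is_interval_1)
    then show "\<exists>y. (f has_real_derivative y) (at x) \<and> 0 < y" using f' by blast
  qed
qed

lemma oriented_integral_eq_diff:
  assumes f: "f integrable_on {p..q}" and "a \<in> {p..q}" "z \<in> {p..q}"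
  shows "oriented_integral a z f = integral {p..z} f - integral {p..a} f"
proof (cases "a \<le> z")
  case True
  have "f integrable_on {p..z}"
    by (rule integrable_subinterval_real[OF f]) (use \<open>z \<in> {p..q}\<close> in auto)
  then have "integral {p..a} f + integral {a..z} f = integral {p..z} f"
    using True \<open>a \<in> {p..q}\<close> by (intro Henstock_Kurzweil_Integration.integral_combine) auto
  then show ?thesis using True by (simp add: oriented_integral_def)
next
  case False
  have "f integrable_on {p..a}"
    by (rule integrable_subinterval_real[OF f]) (use \<open>a \<in> {p..q}\<close> in auto)
  then have "integral {p..z} f + integral {z..a} f = integral {p..a} f"
    using False \<open>z \<in> {p..q}\<close> by (intro Henstock_Kurzweil_Integration.integral_combine) auto
  then show ?thesis using False by (simp add: oriented_integral_def)
qed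

lemma has_real_derivative_oriented_integral:
  assumes S: "open S" "is_interval S" and f: "continuous_on S f" and "a \<in> S" "x \<in> S"
  shows "((\<lambda>z. oriented_integral a z f) has_real_derivative f x) (at x)"
proof -
  obtain e where e: "e > 0" "ball x e \<subseteq> S" using S(1) \<open>x \<in> S\<close> open_contains_ball by blast
  define p where "p = min a (x - e/2)"
  define q where "q = max a (x + e/2)"
  have "x - e/2 \<in> S" "x + e/2 \<in> S"
    using e by (auto intro!: subsetD[OF e(2)] simp: dist_real_def)
  then have "p \<in> S" "q \<in> S" using \<open>a \<in> S\<close> by (simp_all add: p_def q_def min_def max_def)
  then have "{p..q} \<subseteq> S" using S(2) by (meson atLeastAtMost_iff is_interval_1 subsetI)
  then have cpq: "continuous_on {p..q} f" using f by (rule continuous_on_subset[rotated])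
  have px: "p < x" "x < q" using e by (simp_all add: p_def q_def)
  have "((\<lambda>u. integral {p..u} f) has_vector_derivative f x) (at x within {p..q})"
    using integral_has_vector_derivative[OF cpq, of x] px by auto
  moreover have "at x within {p..q} = at x"
    using px by (intro at_within_interior) auto
  ultimately have "((\<lambda>u. integral {p..u} f) has_real_derivative f x) (at x)"
    by (simp add: has_real_derivative_iff_has_vector_derivative)
  then have "((\<lambda>u. integral {p..u} f - integral {p..a} f) has_real_derivative f x) (at x)"
    by (rule DERIV_diff[OF _ DERIV_const, simplified])
  then show ?thesis
  proof (rule has_field_derivative_transform_within_open[of _ _ _ "{p<..<q}"])
    fix z assume "z \<in> {p<..<q}"
    then show "integral {p..z} f - integral {p..a} f = oriented_integral a z f"
      using oriented_integral_eq_diff[OF integrable_continuous_interval[OF cpq], of a z]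
      by (auto simp: p_def q_def)
  qed (use px in auto)
qed

subsection \<open>Logarithmic divergence of antiderivatives of 1/\<sigma>\<close>

lemma filterlim_at_top_by_derivative_comparison:
  fixes K P :: "real \<Rightarrow> real"
  assumes P: "filterlim P at_top F"
    and K': "\<And>z. z \<in> S \<Longrightarrow> (K has_real_derivative k z) (at z)"
    and P': "\<And>z. z \<in> S \<Longrightarrow> (P has_real_derivative p z) (at z)"
    and le: "\<And>z. z \<in> S \<Longrightarrow> p z \<le> k z"
    and ev: "eventually (\<lambda>x. a \<le> x \<and> {a..x} \<subseteq> S) F"
  shows "filterlim K at_top F"
proof -
  have "filterlim (\<lambda>x. (K a - P a) + P x) at_top F"
    by (rule filterlim_tendsto_add_at_top[OF tendsto_const P])
  moreover have "eventually (\<lambda>x. (K a - P a) + P x \<le> K x) F"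
    using ev
  proof (rule eventually_mono)
    fix x assume x: "a \<le> x \<and> {a..x} \<subseteq> S"
    have "K a - P a \<le> K x - P x"
    proof (rule DERIV_nonneg_imp_nondecreasing[of a x "\<lambda>z. K z - P z"])
      fix z assume "a \<le> z" "z \<le> x"
      then have "z \<in> S" using x by auto
      then show "\<exists>d. ((\<lambda>z. K z - P z) has_real_derivative d) (at z) \<and> 0 \<le> d"
        using K' P' le by (intro exI[of _ "k z - p z"]) (auto intro: DERIV_diff)
    qed (use x in simp)
    then show "(K a - P a) + P x \<le> K x" by simp
  qed
  ultimately show ?thesis by (rule filterlim_at_top_mono)
qed

lemma filterlim_antiderivative_reciprocal_at_left_zero:
  fixes \<sigma> K :: "real \<Rightarrow> real"
  assumes lip: "L-lipschitz_on UNIV \<sigma>" and "0 < L" and "a < u" and "\<sigma> u = 0"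
    and pos: "\<And>z. z \<in> {a..<u} \<Longrightarrow> 0 < \<sigma> z"
    and K': "\<And>z. z \<in> {a..<u} \<Longrightarrow> (K has_real_derivative 1 / \<sigma> z) (at z)"
  shows "filterlim K at_top (at_left u)"
proof (rule filterlim_at_top_by_derivative_comparison[OF _ K'])
  show "filterlim (\<lambda>z. - ln (u - z) / L) at_top (at_left u)"
    using \<open>0 < L\<close> by real_asymp
  show "((\<lambda>z. - ln (u - z) / L) has_real_derivative 1 / (L * (u - z))) (at z)"
    if "z \<in> {a..<u}" for z
    using that \<open>0 < L\<close> by (auto intro!: derivative_eq_intros simp: field_simps)
  show "1 / (L * (u - z)) \<le> 1 / \<sigma> z" if z: "z \<in> {a..<u}" for z
  proof -
    have "\<sigma> z \<le> L * (u - z)"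
      using lipschitz_onD[OF lip, of z u] z \<open>\<sigma> u = 0\<close> by (auto simp: dist_real_def)
    then show ?thesis using pos[OF z] by (intro frac_le) auto
  qed
  have "eventually (\<lambda>x. x \<in> {a<..<u}) (at_left u)"
    using \<open>a < u\<close> by (rule eventually_at_left_real)
  then show "eventually (\<lambda>x. a \<le> x \<and> {a..x} \<subseteq> {a..<u}) (at_left u)"
    by (rule eventually_mono) auto
qed

lemma filterlim_antiderivative_reciprocal_at_top:
  fixes \<sigma> K :: "real \<Rightarrow> real"
  assumes lip: "L-lipschitz_on UNIV \<sigma>" and "0 < L"
    and pos: "\<And>z. z \<in> {a..} \<Longrightarrow> 0 < \<sigma> z"
    and K': "\<And>z. z \<in> {a..} \<Longrightarrow> (K has_real_derivative 1 / \<sigma> z) (at z)"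
  shows "filterlim K at_top at_top"
proof (rule filterlim_at_top_by_derivative_comparison[OF _ K'])
  have "0 < \<sigma> a" using pos by simp
  then have pos': "0 < \<sigma> a + L * (z - a)" if "z \<in> {a..}" for z
    using that \<open>0 < L\<close> by (simp add: add_pos_nonneg)
  show "filterlim (\<lambda>z. ln (\<sigma> a + L * (z - a)) / L) at_top at_top"
    using \<open>0 < L\<close> \<open>0 < \<sigma> a\<close> by real_asymp
  show "((\<lambda>z. ln (\<sigma> a + L * (z - a)) / L) has_real_derivative 1 / (\<sigma> a + L * (z - a))) (at z)"
    if "z \<in> {a..}" for z
    using pos'[OF that] \<open>0 < L\<close> by (auto intro!: derivative_eq_intros simp: divide_simps)
  show "1 / (\<sigma> a + L * (z - a)) \<le> 1 / \<sigma> z" if z: "z \<in> {a..}" for z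
  proof -
    have "\<sigma> z \<le> \<sigma> a + L * (z - a)"
      using lipschitz_onD[OF lip, of z a] z by (auto simp: dist_real_def)
    then show ?thesis using pos[OF z] by (intro frac_le) auto
  qed
  show "eventually (\<lambda>x. a \<le> x \<and> {a..x} \<subseteq> {a..}) at_top"
    using eventually_ge_at_top[of a] by (rule eventually_mono) auto
qed

definition at_gap_start :: "(nat \<Rightarrow> real) \<Rightarrow> nat \<Rightarrow> real filter" where
  "at_gap_start xs i = (if i = 0 then at_bot else at_right (xs i))"

definition at_gap_end :: "(nat \<Rightarrow> real) \<Rightarrow> nat \<Rightarrow> nat \<Rightarrow> real filter" where
  "at_gap_end xs n i = (if i = n then at_top else at_left (xs (Suc i)))"

lemma at_gap_start_neq_bot [simp]: "at_gap_start xs i \<noteq> bot"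
  by (simp add: at_gap_start_def trivial_limit_at_right_real)

lemma at_gap_end_neq_bot [simp]: "at_gap_end xs n i \<noteq> bot"
  by (simp add: at_gap_end_def trivial_limit_at_left_real)

lemma eventually_at_gap_start:
  assumes c: "c \<in> zero_gap xs n i"
  shows "eventually (\<lambda>x. x \<in> zero_gap xs n i \<and> x < c) (at_gap_start xs i)"
proof (cases "i = 0")
  case True
  from eventually_gt_at_bot[of c]
  have "eventually (\<lambda>x. x \<in> zero_gap xs n i \<and> x < c) at_bot"
    by (rule eventually_mono) (use True c in \<open>auto simp: zero_gap_def\<close>)
  with True show ?thesis by (simp add: at_gap_start_def)
next
  case False
  then have "xs i < c" using c by (simp add: zero_gap_def)
  then have "eventually (\<lambda>x. x \<in> {xs i<..<c}) (at_right (xs i))" by (rule eventually_at_right_real)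
  then have "eventually (\<lambda>x. x \<in> zero_gap xs n i \<and> x < c) (at_right (xs i))"
    by (rule eventually_mono) (use False c in \<open>auto simp: zero_gap_def\<close>)
  with False show ?thesis by (simp add: at_gap_start_def)
qed

lemma eventually_at_gap_end:
  assumes c: "c \<in> zero_gap xs n i"
  shows "eventually (\<lambda>x. x \<in> zero_gap xs n i \<and> c < x) (at_gap_end xs n i)"
proof (cases "i = n")
  case True
  from eventually_gt_at_top[of c]
  have "eventually (\<lambda>x. x \<in> zero_gap xs n i \<and> c < x) at_top"
    by (rule eventually_mono) (use True c in \<open>auto simp: zero_gap_def\<close>)
  with True show ?thesis by (simp add: at_gap_end_def)
next
  case False
  then have "c < xs (Suc i)" using c by (simp add: zero_gap_def)
  then have "eventually (\<lambda>x. x \<in> {c<..<xs (Suc i)}) (at_left (xs (Suc i)))"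
    by (rule eventually_at_left_real)
  then have "eventually (\<lambda>x. x \<in> zero_gap xs n i \<and> c < x) (at_left (xs (Suc i)))"
    by (rule eventually_mono) (use False c in \<open>auto simp: zero_gap_def\<close>)
  with False show ?thesis by (simp add: at_gap_end_def)
qed

lemma tendsto_gap_start:
  assumes a: "a \<in> zero_gap xs n i"
    and below: "\<And>c. c \<in> zero_gap xs n i \<Longrightarrow> eventually (\<lambda>x. f x \<in> zero_gap xs n i \<and> f x < c) F"
  shows "if i = 0 then filterlim f at_bot F else (f \<longlongrightarrow> xs i) F"
proof (cases "i = 0")
  case True
  have "filterlim f at_bot F"
    unfolding filterlim_at_bot
  proof
    fix Z :: real
    have "min Z a \<in> zero_gap xs n i" using True a by (auto simp: zero_gap_def)
    from below[OF this] show "eventually (\<lambda>x. f x \<le> Z) F" by (rule eventually_mono) simp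
  qed
  with True show ?thesis by simp
next
  case False
  have "(f \<longlongrightarrow> xs i) F"
    unfolding order_tendsto_iff
  proof (intro conjI allI impI)
    fix b assume "b < xs i"
    from below[OF a] show "eventually (\<lambda>x. b < f x) F"
      by (rule eventually_mono) (use False \<open>b < xs i\<close> in \<open>auto simp: zero_gap_def\<close>)
  next
    fix b assume "xs i < b"
    then have "min b a \<in> zero_gap xs n i" using False a by (auto simp: zero_gap_def)
    from below[OF this] show "eventually (\<lambda>x. f x < b) F" by (rule eventually_mono) simp
  qed
  with False show ?thesis by simp
qed

lemma tendsto_gap_end:
  assumes a: "a \<in> zero_gap xs n i"
    and above: "\<And>c. c \<in> zero_gap xs n i \<Longrightarrow> eventually (\<lambda>x. f x \<in> zero_gap xs n i \<and> c < f x) F"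
  shows "if i = n then filterlim f at_top F else (f \<longlongrightarrow> xs (Suc i)) F"
proof (cases "i = n")
  case True
  have "filterlim f at_top F"
    unfolding filterlim_at_top
  proof
    fix Z :: real
    have "max Z a \<in> zero_gap xs n i" using True a by (auto simp: zero_gap_def)
    from above[OF this] show "eventually (\<lambda>x. Z \<le> f x) F" by (rule eventually_mono) simp
  qed
  with True show ?thesis by simp
next
  case False
  have "(f \<longlongrightarrow> xs (Suc i)) F"
    unfolding order_tendsto_iff
  proof (intro conjI allI impI)
    fix b assume "b < xs (Suc i)"
    then have "max b a \<in> zero_gap xs n i" using False a by (auto simp: zero_gap_def)
    from above[OF this] show "eventually (\<lambda>x. b < f x) F" by (rule eventually_mono) simp
  next
    fix b assume "xs (Suc i) < b"
    from above[OF a] show "eventually (\<lambda>x. f x < b) F"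
      by (rule eventually_mono) (use False \<open>xs (Suc i) < b\<close> in \<open>auto simp: zero_gap_def\<close>)
  qed
  with False show ?thesis by simp
qed

lemma strict_mono_on_onto_zero_gap_tendsto_ends:
  assumes mono: "strict_mono_on (zero_gap xs n i) \<psi>" and onto: "\<psi> ` zero_gap xs n i = zero_gap xs n i"
    and a: "a \<in> zero_gap xs n i"
  shows "if i = 0 then filterlim \<psi> at_bot at_bot else (\<psi> \<longlongrightarrow> xs i) (at_right (xs i))"
    and "if i = n then filterlim \<psi> at_top at_top else (\<psi> \<longlongrightarrow> xs (Suc i)) (at_left (xs (Suc i)))"
proof -
  have "if i = 0 then filterlim \<psi> at_bot (at_gap_start xs i) else (\<psi> \<longlongrightarrow> xs i) (at_gap_start xs i)"
  proof (rule tendsto_gap_start[OF a])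
    fix c assume "c \<in> zero_gap xs n i"
    then obtain d where d: "d \<in> zero_gap xs n i" "c = \<psi> d" using onto by blast
    from eventually_at_gap_start[OF d(1)]
    show "eventually (\<lambda>x. \<psi> x \<in> zero_gap xs n i \<and> \<psi> x < c) (at_gap_start xs i)"
      by (rule eventually_mono) (use d onto strict_mono_on_less[OF mono] in auto)
  qed
  then show "if i = 0 then filterlim \<psi> at_bot at_bot else (\<psi> \<longlongrightarrow> xs i) (at_right (xs i))"
    by (simp add: at_gap_start_def split: if_splits)
  have "if i = n then filterlim \<psi> at_top (at_gap_end xs n i) else (\<psi> \<longlongrightarrow> xs (Suc i)) (at_gap_end xs n i)"
  proof (rule tendsto_gap_end[OF a])
    fix c assume "c \<in> zero_gap xs n i"
    then obtain d where d: "d \<in> zero_gap xs n i" "c = \<psi> d" using onto by blast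
    from eventually_at_gap_end[OF d(1)]
    show "eventually (\<lambda>x. \<psi> x \<in> zero_gap xs n i \<and> c < \<psi> x) (at_gap_end xs n i)"
      by (rule eventually_mono) (use d onto strict_mono_on_less[OF mono] in auto)
  qed
  then show "if i = n then filterlim \<psi> at_top at_top else (\<psi> \<longlongrightarrow> xs (Suc i)) (at_left (xs (Suc i)))"
    by (simp add: at_gap_end_def split: if_splits)
qed

lemma image_eq_UNIV_if_filterlim_gap_ends:
  fixes H :: "real \<Rightarrow> real"
  assumes cont: "continuous_on (zero_gap xs n i) H" and a: "a \<in> zero_gap xs n i"
    and lim_start: "filterlim H at_bot (at_gap_start xs i)"
    and lim_end: "filterlim H at_top (at_gap_end xs n i)"
  shows "H ` zero_gap xs n i = UNIV"
proof -
  have "t \<in> H ` zero_gap xs n i" for t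
  proof -
    have "eventually (\<lambda>x. x \<in> zero_gap xs n i \<and> H x \<le> t) (at_gap_start xs i)"
      using eventually_at_gap_start[OF a] lim_start unfolding filterlim_at_bot
      by (auto elim: eventually_elim2)
    then obtain u where "u \<in> zero_gap xs n i" "H u \<le> t"
      using eventually_happens'[OF at_gap_start_neq_bot] by blast
    moreover have "eventually (\<lambda>x. x \<in> zero_gap xs n i \<and> t \<le> H x) (at_gap_end xs n i)"
      using eventually_at_gap_end[OF a] lim_end unfolding filterlim_at_top
      by (auto elim: eventually_elim2)
    then obtain v where "v \<in> zero_gap xs n i" "t \<le> H v"
      using eventually_happens'[OF at_gap_end_neq_bot] by blast
    moreover have "is_interval (H ` zero_gap xs n i)"
      using cont is_interval_zero_gap
      by (simp add: is_interval_connected_1 connected_continuous_image)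
    ultimately show ?thesis unfolding is_interval_1 by (meson imageI)
  qed
  then show ?thesis by blast
qed

lemma bij_betw_inv_into_shift:
  fixes H :: "'a \<Rightarrow> real"
  assumes "bij_betw H S UNIV"
  shows "bij_betw (\<lambda>x. inv_into S H (H x + y)) S S"
proof -
  have "bij_betw (\<lambda>t. t + y) UNIV UNIV" by (rule bij_betwI[where g = "\<lambda>t. t - y"]) auto
  with assms have "bij_betw ((\<lambda>t. t + y) \<circ> H) S UNIV" by (rule bij_betw_trans)
  then have "bij_betw (inv_into S H \<circ> ((\<lambda>t. t + y) \<circ> H)) S S"
    using bij_betw_inv_into[OF assms] by (rule bij_betw_trans)
  then show ?thesis by (simp add: comp_def)
qed

lemma strict_mono_on_inv_into_shift:
  fixes H :: "real \<Rightarrow> real"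
  assumes mono: "strict_mono_on S H \<or> strict_antimono_on S H" and onto: "H ` S = UNIV"
  shows "strict_mono_on S (\<lambda>x. inv_into S H (H x + y))"
proof (rule strict_mono_onI)
  fix u v assume uv: "u \<in> S" "v \<in> S" "u < v"
  let ?p = "inv_into S H (H u + y)" and ?q = "inv_into S H (H v + y)"
  have pq: "?p \<in> S" "?q \<in> S" "H ?p = H u + y" "H ?q = H v + y"
    using onto by (simp_all add: inv_into_into f_inv_into_f)
  from mono show "?p < ?q"
  proof
    assume incr: "strict_mono_on S H"
    then have "H ?p < H ?q" using uv pq by (simp add: strict_mono_on_less)
    then show ?thesis using incr pq(1,2) by (simp add: strict_mono_on_less)
  next
    assume anti: "strict_antimono_on S H"
    have "H ?q < H ?p" using monotone_onD[OF anti uv] pq by simp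
    show ?thesis
    proof (rule ccontr)
      assume "\<not> ?p < ?q"
      then have "H ?p \<le> H ?q" using monotone_onD[OF anti pq(2,1)] by force
      with \<open>H ?q < H ?p\<close> show False by simp
    qed
  qed
qed

lemma H_fun_uminus: "H_fun (\<lambda>t. - \<sigma> t) a = (\<lambda>x. - H_fun \<sigma> a x)"
proof
  fix x
  have "(\<lambda>y. 1 / - \<sigma> y) = (\<lambda>y. - (1 / \<sigma> y))" by simp
  then show "H_fun (\<lambda>t. - \<sigma> t) a x = - H_fun \<sigma> a x"
    unfolding H_fun_def oriented_integral_def integral_neg by simp
qed

lemma continuous_on_reciprocal_zero_gap:
  fixes \<sigma> :: "real \<Rightarrow> real"
  assumes "continuous_on UNIV \<sigma>" and "\<And>x. x \<in> zero_gap xs n i \<Longrightarrow> \<sigma> x \<noteq> 0"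
  shows "continuous_on (zero_gap xs n i) (\<lambda>y. 1 / \<sigma> y)"
proof -
  have "continuous_on (zero_gap xs n i) \<sigma>" using assms(1) by (rule continuous_on_subset) simp
  then show ?thesis using assms(2) by (intro continuous_on_divide continuous_on_const) auto
qed

lemma H_fun_has_real_derivative:
  fixes \<sigma> :: "real \<Rightarrow> real"
  assumes "continuous_on UNIV \<sigma>" and "\<And>x. x \<in> zero_gap xs n i \<Longrightarrow> \<sigma> x \<noteq> 0"
    and "a \<in> zero_gap xs n i" "x \<in> zero_gap xs n i"
  shows "(H_fun \<sigma> a has_real_derivative 1 / \<sigma> x) (at x)"
proof -
  have "H_fun \<sigma> a = (\<lambda>z. oriented_integral a z (\<lambda>y. 1 / \<sigma> y))" by (simp add: fun_eq_iff H_fun_def)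
  then show ?thesis
    using has_real_derivative_oriented_integral[OF open_zero_gap is_interval_zero_gap
        continuous_on_reciprocal_zero_gap[OF assms(1,2)] assms(3,4)]
    by (simp only:)
qed

lemma reciprocal_integrable_on_zero_gap:
  fixes \<sigma> :: "real \<Rightarrow> real"
  assumes "continuous_on UNIV \<sigma>" and "\<And>x. x \<in> zero_gap xs n i \<Longrightarrow> \<sigma> x \<noteq> 0"
    and "a \<in> zero_gap xs n i" "x \<in> zero_gap xs n i"
  shows "(\<lambda>y. 1 / \<sigma> y) integrable_on {min a x..max a x}"
proof (rule integrable_continuous_interval)
  have "min a x \<in> zero_gap xs n i" "max a x \<in> zero_gap xs n i"
    using assms(3,4) by (simp_all add: min_def max_def)
  then have "{min a x..max a x} \<subseteq> zero_gap xs n i"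
    using is_interval_zero_gap by (meson atLeastAtMost_iff is_interval_1 subsetI)
  with continuous_on_reciprocal_zero_gap[OF assms(1,2)]
  show "continuous_on {min a x..max a x} (\<lambda>y. 1 / \<sigma> y)" by (rule continuous_on_subset)
qed

lemma H_fun_filterlim_gap_ends:
  fixes \<sigma> :: "real \<Rightarrow> real"
  assumes lip: "L-lipschitz_on UNIV \<sigma>" and "0 < L" and a: "a \<in> zero_gap xs n i"
    and pos: "\<And>x. x \<in> zero_gap xs n i \<Longrightarrow> 0 < \<sigma> x"
    and zero_start: "i \<noteq> 0 \<Longrightarrow> \<sigma> (xs i) = 0" and zero_end: "i \<noteq> n \<Longrightarrow> \<sigma> (xs (Suc i)) = 0"
  shows "filterlim (H_fun \<sigma> a) at_bot (at_gap_start xs i)"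
    and "filterlim (H_fun \<sigma> a) at_top (at_gap_end xs n i)"
proof -
  let ?G = "zero_gap xs n i" and ?H = "H_fun \<sigma> a"
  have H': "(?H has_real_derivative 1 / \<sigma> x) (at x)" if "x \<in> ?G" for x
    using lipschitz_on_continuous_on[OF lip] pos a that
    by (intro H_fun_has_real_derivative) (auto simp: less_imp_neq[symmetric])
  show "filterlim ?H at_top (at_gap_end xs n i)"
  proof (cases "i = n")
    case True
    have G: "z \<in> ?G" if "z \<in> {a..}" for z using that a True by (auto simp: zero_gap_def)
    have "filterlim ?H at_top at_top"
      by (rule filterlim_antiderivative_reciprocal_at_top[OF lip \<open>0 < L\<close>]) (use G pos H' in blast)+
    with True show ?thesis by (simp add: at_gap_end_def)
  next
    case False
    have G: "z \<in> ?G" if "z \<in> {a..<xs (Suc i)}" for z using that a False by (auto simp: zero_gap_def)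
    have "a < xs (Suc i)" using a False by (simp add: zero_gap_def)
    then have "filterlim ?H at_top (at_left (xs (Suc i)))"
      by (rule filterlim_antiderivative_reciprocal_at_left_zero[OF lip \<open>0 < L\<close> _ zero_end[OF False]])
        (use G pos H' in blast)+
    with False show ?thesis by (simp add: at_gap_end_def)
  qed
  txt \<open>The start of the gap becomes the end of the reflected gap, where t \<mapsto> -H(-t) is an
    antiderivative of 1/\<sigma>(-t).\<close>
  define \<tau> where "\<tau> = (\<lambda>t. \<sigma> (- t))"
  have lip': "L-lipschitz_on UNIV \<tau>"
    using lip by (auto simp: lipschitz_on_def \<tau>_def) (metis dist_minus)
  have K': "((\<lambda>t. - ?H (- t)) has_real_derivative 1 / \<tau> z) (at z)" if "- z \<in> ?G" for z
    using DERIV_minus[OF iffD1[OF DERIV_mirror H'[OF that]]] by (simp add: \<tau>_def)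
  have pos': "0 < \<tau> z" if "- z \<in> ?G" for z using pos[OF that] by (simp add: \<tau>_def)
  show "filterlim ?H at_bot (at_gap_start xs i)"
  proof (cases "i = 0")
    case True
    have G: "- z \<in> ?G" if "z \<in> {- a..}" for z using that a True by (auto simp: zero_gap_def)
    have "filterlim (\<lambda>t. - ?H (- t)) at_top at_top"
      by (rule filterlim_antiderivative_reciprocal_at_top[OF lip' \<open>0 < L\<close>]) (use G pos' K' in blast)+
    with True show ?thesis
      by (simp add: at_gap_start_def filterlim_at_bot_mirror filterlim_uminus_at_top)
  next
    case False
    have G: "- z \<in> ?G" if "z \<in> {- a..<- xs i}" for z using that a False by (auto simp: zero_gap_def)
    have "- a < - xs i" "\<tau> (- xs i) = 0" using a False zero_start by (simp_all add: zero_gap_def \<tau>_def)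
    then have "filterlim (\<lambda>t. - ?H (- t)) at_top (at_left (- xs i))"
      by (intro filterlim_antiderivative_reciprocal_at_left_zero[OF lip' \<open>0 < L\<close>])
        (use G pos' K' in blast)+
    with False show ?thesis
      by (simp add: at_gap_start_def filterlim_at_left_to_right filterlim_uminus_at_top)
  qed
qed

lemma H_fun_strict_mono_onto_zero_gap:
  fixes \<sigma> :: "real \<Rightarrow> real"
  assumes lip: "L-lipschitz_on UNIV \<sigma>" and "0 < L" and a: "a \<in> zero_gap xs n i"
    and pos: "\<And>x. x \<in> zero_gap xs n i \<Longrightarrow> 0 < \<sigma> x"
    and zero_start: "i \<noteq> 0 \<Longrightarrow> \<sigma> (xs i) = 0" and zero_end: "i \<noteq> n \<Longrightarrow> \<sigma> (xs (Suc i)) = 0"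
  shows "strict_mono_on (zero_gap xs n i) (H_fun \<sigma> a)" and "H_fun \<sigma> a ` zero_gap xs n i = UNIV"
proof -
  have H': "(H_fun \<sigma> a has_real_derivative 1 / \<sigma> x) (at x)" if "x \<in> zero_gap xs n i" for x
    using lipschitz_on_continuous_on[OF lip] pos a that
    by (intro H_fun_has_real_derivative) (auto simp: less_imp_neq[symmetric])
  then show "strict_mono_on (zero_gap xs n i) (H_fun \<sigma> a)"
    using pos by (intro strict_mono_on_if_deriv_pos[OF is_interval_zero_gap]) auto
  have "continuous_on (zero_gap xs n i) (H_fun \<sigma> a)"
    using H' by (intro continuous_at_imp_continuous_on) (auto intro: DERIV_isCont)
  then show "H_fun \<sigma> a ` zero_gap xs n i = UNIV"
    using H_fun_filterlim_gap_ends[OF assms] by (intro image_eq_UNIV_if_filterlim_gap_ends[OF _ a])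
qed

lemma H_fun_strict_monotone_onto_zero_gap:
  fixes \<sigma> :: "real \<Rightarrow> real"
  assumes lip: "L-lipschitz_on UNIV \<sigma>" and "0 < L" and a: "a \<in> zero_gap xs n i"
    and nz: "\<And>x. x \<in> zero_gap xs n i \<Longrightarrow> \<sigma> x \<noteq> 0"
    and zero_start: "i \<noteq> 0 \<Longrightarrow> \<sigma> (xs i) = 0" and zero_end: "i \<noteq> n \<Longrightarrow> \<sigma> (xs (Suc i)) = 0"
  shows "strict_mono_on (zero_gap xs n i) (H_fun \<sigma> a) \<or> strict_antimono_on (zero_gap xs n i) (H_fun \<sigma> a)"
    and "H_fun \<sigma> a ` zero_gap xs n i = UNIV"
proof -
  have "continuous_on (zero_gap xs n i) \<sigma>"
    using lipschitz_on_continuous_on[OF lip] by (rule continuous_on_subset) simp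
  then have "(\<forall>x\<in>zero_gap xs n i. 0 < \<sigma> x) \<or> (\<forall>x\<in>zero_gap xs n i. \<sigma> x < 0)"
    using is_interval_zero_gap nz by (intro continuous_on_sign_cases)
  then consider "\<And>x. x \<in> zero_gap xs n i \<Longrightarrow> 0 < \<sigma> x" | "\<And>x. x \<in> zero_gap xs n i \<Longrightarrow> \<sigma> x < 0"
    by blast
  then have "(strict_mono_on (zero_gap xs n i) (H_fun \<sigma> a) \<or> strict_antimono_on (zero_gap xs n i) (H_fun \<sigma> a))
    \<and> H_fun \<sigma> a ` zero_gap xs n i = UNIV"
  proof cases
    case 1
    then show ?thesis using H_fun_strict_mono_onto_zero_gap[OF lip \<open>0 < L\<close> a _ zero_start zero_end] by blast
  next
    case 2
    have "strict_mono_on (zero_gap xs n i) (H_fun (\<lambda>t. - \<sigma> t) a)"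
      "H_fun (\<lambda>t. - \<sigma> t) a ` zero_gap xs n i = UNIV"
      using 2 zero_start zero_end
      by (intro H_fun_strict_mono_onto_zero_gap[OF lipschitz_on_minus[OF lip] \<open>0 < L\<close> a]; force)+
    then have "strict_mono_on (zero_gap xs n i) (\<lambda>x. - H_fun \<sigma> a x)"
      "uminus ` H_fun \<sigma> a ` zero_gap xs n i = UNIV"
      by (simp_all add: H_fun_uminus image_image)
    then show ?thesis
      by (auto simp: monotone_on_def) (metis UNIV_I image_iff minus_minus)
  qed
  then show "strict_mono_on (zero_gap xs n i) (H_fun \<sigma> a) \<or> strict_antimono_on (zero_gap xs n i) (H_fun \<sigma> a)"
    and "H_fun \<sigma> a ` zero_gap xs n i = UNIV" by blast+
qed

theorem lemma3:
  fixes \<sigma> :: "real \<Rightarrow> real" and xs :: "nat \<Rightarrow> real" and n i :: nat and a :: real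
  assumes lip: "\<exists>L. L-lipschitz_on UNIV \<sigma>"
    and ord: "strict_mono_on {1..n} xs"
    and zeros: "{t. \<sigma> t = 0} = xs ` {1..n}"
    and i: "i \<le> n"
    and a: "a \<in> zero_gap xs n i"
  shows "(\<forall>x\<in>zero_gap xs n i. (\<lambda>y. 1 / \<sigma> y) integrable_on {min a x..max a x})
    \<and> (mono_on (zero_gap xs n i) (H_fun \<sigma> a) \<or> antimono_on (zero_gap xs n i) (H_fun \<sigma> a))
    \<and> bij_betw (H_fun \<sigma> a) (zero_gap xs n i) UNIV
    \<and> bij_betw (inv_into (zero_gap xs n i) (H_fun \<sigma> a)) UNIV (zero_gap xs n i)
    \<and> (\<forall>x\<in>zero_gap xs n i. inv_into (zero_gap xs n i) (H_fun \<sigma> a) (H_fun \<sigma> a x) = x)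
    \<and> (\<forall>t. H_fun \<sigma> a (inv_into (zero_gap xs n i) (H_fun \<sigma> a) t) = t)
    \<and> (\<forall>y::real.
         bij_betw (\<lambda>x. inv_into (zero_gap xs n i) (H_fun \<sigma> a) (H_fun \<sigma> a x + y))
                  (zero_gap xs n i) (zero_gap xs n i)
       \<and> (if i = 0
          then filterlim (\<lambda>x. inv_into (zero_gap xs n i) (H_fun \<sigma> a) (H_fun \<sigma> a x + y)) at_bot at_bot
          else ((\<lambda>x. inv_into (zero_gap xs n i) (H_fun \<sigma> a) (H_fun \<sigma> a x + y))
                  \<longlongrightarrow> xs i) (at_right (xs i)))
       \<and> (if i = n
          then filterlim (\<lambda>x. inv_into (zero_gap xs n i) (H_fun \<sigma> a) (H_fun \<sigma> a x + y)) at_top at_top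
          else ((\<lambda>x. inv_into (zero_gap xs n i) (H_fun \<sigma> a) (H_fun \<sigma> a x + y))
                  \<longlongrightarrow> xs (Suc i)) (at_left (xs (Suc i)))))"
proof -
  let ?G = "zero_gap xs n i" and ?H = "H_fun \<sigma> a"
  let ?I = "inv_into ?G ?H"
  obtain L0 where "L0-lipschitz_on UNIV \<sigma>" using lip by blast
  then have L: "(max L0 1)-lipschitz_on UNIV \<sigma>" by (rule lipschitz_on_le) simp
  have zero_iff: "\<sigma> t = 0 \<longleftrightarrow> t \<in> xs ` {1..n}" for t unfolding zeros[symmetric] by simp
  then have zero_start: "i \<noteq> 0 \<Longrightarrow> \<sigma> (xs i) = 0" and zero_end: "i \<noteq> n \<Longrightarrow> \<sigma> (xs (Suc i)) = 0"
    using i by auto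
  have nz: "\<sigma> x \<noteq> 0" if "x \<in> ?G" for x
    using that xs_notin_zero_gap[OF ord i] by (auto simp: zero_iff)
  have "0 < max L0 1" by simp
  note H = H_fun_strict_monotone_onto_zero_gap[OF L this a nz zero_start zero_end]
  then have inj: "inj_on ?H ?G" by (auto intro: strict_mono_on_imp_inj_on simp: strict_antimono_iff_antimono)
  then have bij: "bij_betw ?H ?G UNIV" using H(2) by (simp add: bij_betw_def)
  have shift: "bij_betw (\<lambda>x. ?I (?H x + y)) ?G ?G" "strict_mono_on ?G (\<lambda>x. ?I (?H x + y))" for y
    using bij_betw_inv_into_shift[OF bij] strict_mono_on_inv_into_shift[OF H] by blast+
  note ends = strict_mono_on_onto_zero_gap_tendsto_ends[OF shift(2) bij_betw_imp_surj_on[OF shift(1)] a]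
  have "\<forall>x\<in>?G. (\<lambda>y. 1 / \<sigma> y) integrable_on {min a x..max a x}"
    using reciprocal_integrable_on_zero_gap[OF lipschitz_on_continuous_on[OF L] nz a] by blast
  moreover have "mono_on ?G ?H \<or> antimono_on ?G ?H"
    using H(1) by (auto dest: strict_mono_on_imp_mono_on simp: strict_antimono_iff_antimono)
  moreover have "\<forall>x\<in>?G. ?I (?H x) = x" "\<forall>t. ?H (?I t) = t"
    using inj H(2) by (simp_all add: inv_into_f_f f_inv_into_f)
  ultimately show ?thesis
    using bij bij_betw_inv_into[OF bij] shift(1) ends by blast
qed

end
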